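(* Let $a_1,\dots,a_t$ be positive integers and $I=\langle x_1^{a_1},\dots,x_t^{a_t}\rangle\subset S=K[x_1,\dots,x_t]$. Then $v(I^{n+1})=v(I)+n\,\alpha(I)$ for all $n\ge 1$.
   Context: $K$ is a field and $S$ is standard graded. For a proper graded ideal $J$, the $v$-number is $v(J)=\min\{k\ge 0 : \exists f\in S_k,\ \mathcal P\in\operatorname{Ass}(S/J) \text{ with } (J:f)=\mathcal P\}$. $\alpha(I)=\min\{\deg f : f\in I\setminus\{0\} \text{ homogeneous}\}$. *)

theory Defs
  imports "HOL-Library.Poly_Mapping"
begin

text \<open>Polynomial ring S = K[x_v : v in 'v] (variables indexed by a finite type 'v,
  so t = CARD('v)): polynomials are finitely supported maps from monomials
  (finitely supported exponent vectors) to coefficients in K.\<close>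

type_synonym ('v, 'k) mpoly = "('v \<Rightarrow>\<^sub>0 nat) \<Rightarrow>\<^sub>0 'k"

definition mon_deg :: "('v \<Rightarrow>\<^sub>0 nat) \<Rightarrow> nat" where
  "mon_deg m = (\<Sum>v\<in>Poly_Mapping.keys m. Poly_Mapping.lookup m v)"

text \<open>Homogeneous of degree k (the zero polynomial belongs to every S_k).\<close>
definition homogeneous_of :: "nat \<Rightarrow> ('v, 'k::zero) mpoly \<Rightarrow> bool" where
  "homogeneous_of k f \<longleftrightarrow> (\<forall>m\<in>Poly_Mapping.keys f. mon_deg m = k)"

definition is_ideal :: "'a::comm_ring_1 set \<Rightarrow> bool" where
  "is_ideal J \<longleftrightarrow> 0 \<in> J \<and> (\<forall>a\<in>J. \<forall>b\<in>J. a + b \<in> J) \<and> (\<forall>r. \<forall>a\<in>J. r * a \<in> J)"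

definition ideal_gen :: "'a::comm_ring_1 set \<Rightarrow> 'a set" where
  "ideal_gen G = \<Inter>{J. is_ideal J \<and> G \<subseteq> J}"

definition ideal_pow :: "'a::comm_ring_1 set \<Rightarrow> nat \<Rightarrow> 'a set" where
  "ideal_pow I n = ideal_gen {prod_list xs | xs. length xs = n \<and> set xs \<subseteq> I}"

definition ideal_colon :: "'a::comm_ring_1 set \<Rightarrow> 'a \<Rightarrow> 'a set" where
  "ideal_colon J f = {g. g * f \<in> J}"

definition prime_ideal :: "'a::comm_ring_1 set \<Rightarrow> bool" where
  "prime_ideal P \<longleftrightarrow> is_ideal P \<and> P \<noteq> UNIV \<and> (\<forall>a b. a * b \<in> P \<longrightarrow> a \<in> P \<or> b \<in> P)"

definition Ass :: "'a::comm_ring_1 set \<Rightarrow> 'a set set" where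
  "Ass J = {P. prime_ideal P \<and> (\<exists>f. ideal_colon J f = P)}"

definition v_number :: "('v, 'k::field) mpoly set \<Rightarrow> nat" where
  "v_number J = (LEAST k. \<exists>f P. homogeneous_of k f \<and> P \<in> Ass J \<and> ideal_colon J f = P)"

definition alpha_ideal :: "('v, 'k::field) mpoly set \<Rightarrow> nat" where
  "alpha_ideal I = (LEAST d. \<exists>f\<in>I. f \<noteq> 0 \<and> homogeneous_of d f)"

definition var_pow :: "'v \<Rightarrow> nat \<Rightarrow> ('v, 'k::field) mpoly" where
  "var_pow v e = Poly_Mapping.single (Poly_Mapping.single v e) 1"

end

theory Submission
  imports Defs
begin

text \<open>
  For an exponent vector m write ord(m) = \<Sum>v. m(v) div a(v) (power_order a m). Then I^k is the monomial
  ideal spanned by the monomials x^m with k \<le> ord(m). Suppose (I^(k+1) : f) is a prime P.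
  Then f has a monomial x^u outside I^(k+1) (otherwise P = S), and every variable lies in P
  because a power of it lies in I^(k+1); hence x(i) x^u lies in I^(k+1) for all i, i.e. x^u
  is a socle monomial. Raising any single exponent of u by one must then increase ord,
  which forces u(v) mod a(v) = a(v) - 1 for all v and ord(u) = k, so
  deg f = deg x^u \<ge> (\<Sum>v. a(v) - 1) + k min a.
  The monomial x(i0)^(k a(i0)) \<Prod>v. x(v)^(a(v) - 1) with a(i0) = min a attains the bound,
  its colon ideal being the maximal ideal (x(1), ..., x(t)). Thus
  v(I^(k+1)) = (\<Sum>v. a(v) - 1) + k min a, and \<alpha>(I) = min a.
\<close>

section \<open>Ideals, powers and colon ideals\<close>

lemma is_ideal_ideal_gen: "is_ideal (ideal_gen G)"
  unfolding is_ideal_def ideal_gen_def by auto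

lemma ideal_gen_superset: "G \<subseteq> ideal_gen G"
  unfolding ideal_gen_def by auto

lemma ideal_gen_minimal: "is_ideal J \<Longrightarrow> G \<subseteq> J \<Longrightarrow> ideal_gen G \<subseteq> J"
  unfolding ideal_gen_def by auto

lemma ideal_mult_left: "is_ideal J \<Longrightarrow> x \<in> J \<Longrightarrow> r * x \<in> J"
  unfolding is_ideal_def by blast

lemma ideal_sum: "is_ideal J \<Longrightarrow> (\<And>x. x \<in> A \<Longrightarrow> f x \<in> J) \<Longrightarrow> sum f A \<in> J"
  by (induction A rule: infinite_finite_induct) (auto simp: is_ideal_def)

lemma ideal_pow_1:
  assumes "is_ideal I"
  shows "ideal_pow I 1 = I"
proof -
  have singletons: "{prod_list xs | xs. length xs = 1 \<and> set xs \<subseteq> I} = I"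
  proof (intro equalityI subsetI)
    fix x assume "x \<in> {prod_list xs | xs. length xs = 1 \<and> set xs \<subseteq> I}"
    then obtain y where "x = prod_list [y]" "y \<in> I"
      by (auto simp: length_Suc_conv)
    then show "x \<in> I"
      by simp
  next
    fix x assume "x \<in> I"
    then show "x \<in> {prod_list xs | xs. length xs = 1 \<and> set xs \<subseteq> I}"
      by (intro CollectI exI[of _ "[x]"]) simp
  qed
  have "ideal_gen I = I"
    using ideal_gen_minimal[OF assms order_refl] ideal_gen_superset[of I] by (rule antisym)
  then show ?thesis
    unfolding ideal_pow_def singletons .
qed

lemma ideal_subset_colon:
  assumes "is_ideal J"
  shows "J \<subseteq> ideal_colon J f"
proof
  fix g assume "g \<in> J"
  then have "f * g \<in> J"
    by (rule ideal_mult_left[OF assms])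
  then show "g \<in> ideal_colon J f"
    by (simp add: ideal_colon_def mult.commute)
qed

lemma ideal_colon_prime_not_member:
  assumes "is_ideal J" and "prime_ideal (ideal_colon J f)"
  shows "f \<notin> J"
proof
  assume "f \<in> J"
  then have "ideal_colon J f = UNIV"
    unfolding ideal_colon_def using ideal_mult_left[OF assms(1)] by blast
  with assms(2) show False
    unfolding prime_ideal_def by blast
qed

lemma prime_ideal_power_mem:
  assumes "prime_ideal P" and "x ^ Suc n \<in> P"
  shows "x \<in> P"
  using assms(2)
proof (induction n)
  case (Suc n)
  then have "x \<in> P \<or> x ^ Suc n \<in> P"
    using assms(1) unfolding prime_ideal_def by (metis power_Suc)
  with Suc.IH show ?case
    by blast
qed simp

section \<open>Monomials and monomial ideals\<close>

lemma lookup_monomial_mult: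
  "Poly_Mapping.lookup (Poly_Mapping.single u c * g :: ('v, 'k::comm_semiring_1) mpoly) (u + m) =
     c * Poly_Mapping.lookup g m"
proof -
  have "Poly_Mapping.lookup (Poly_Mapping.single u c * g) (u + m) =
      (\<Sum>l. (c when u = l) * (\<Sum>q. Poly_Mapping.lookup g q when u + m = l + q))"
    unfolding lookup_mult lookup_single ..
  also have "\<dots> = (\<Sum>l. c * (\<Sum>q. Poly_Mapping.lookup g q when u + m = l + q) when u = l)"
    by (intro Sum_any.cong) (simp add: when_def)
  also have "\<dots> = c * (\<Sum>q. Poly_Mapping.lookup g q when u + m = u + q)"
    by (rule Sum_any_when_equal')
  also have "(\<Sum>q. Poly_Mapping.lookup g q when u + m = u + q) = Poly_Mapping.lookup g m"
    by (simp add: when_def)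
  finally show ?thesis .
qed

lemma keys_monomial_mult:
  "Poly_Mapping.keys (Poly_Mapping.single u 1 * g :: ('v, 'k::comm_semiring_1) mpoly) =
     (+) u ` Poly_Mapping.keys g"
proof
  show "Poly_Mapping.keys (Poly_Mapping.single u 1 * g) \<subseteq> (+) u ` Poly_Mapping.keys g"
    using keys_mult[of "Poly_Mapping.single u 1" g] by auto
  show "(+) u ` Poly_Mapping.keys g \<subseteq> Poly_Mapping.keys (Poly_Mapping.single u 1 * g)"
    by (auto simp: in_keys_iff lookup_monomial_mult)
qed

lemma monomial_add_eq_0_iff: "l + q = (0 :: 'v \<Rightarrow>\<^sub>0 nat) \<longleftrightarrow> l = 0 \<and> q = 0"
  by (metis add_eq_0_iff_both_eq_0 lookup_add lookup_zero poly_mapping_eqI add_0)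

lemma lookup_mult_0:
  "Poly_Mapping.lookup (f * g :: ('v, 'k::comm_semiring_1) mpoly) 0 =
     Poly_Mapping.lookup f 0 * Poly_Mapping.lookup g 0"
proof -
  have "(\<Sum>q. Poly_Mapping.lookup g q when 0 = l + q) = (Poly_Mapping.lookup g 0 when l = 0)" for l
  proof (cases "l = 0")
    case False
    then show ?thesis
      by (simp add: monomial_add_eq_0_iff)
  qed simp
  then have "Poly_Mapping.lookup (f * g) 0 =
      (\<Sum>l. Poly_Mapping.lookup f l * Poly_Mapping.lookup g 0 when l = 0)"
    unfolding lookup_mult by (simp add: mult_when)
  then show ?thesis
    by simp
qed

lemma mon_deg_eq_sum: "mon_deg (m :: 'v::finite \<Rightarrow>\<^sub>0 nat) = (\<Sum>v\<in>UNIV. Poly_Mapping.lookup m v)"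
  unfolding mon_deg_def by (rule sum.mono_neutral_left) (auto simp: in_keys_iff)

lemma monomial_mult_var_pow:
  "Poly_Mapping.single m 1 * var_pow i e =
     (Poly_Mapping.single (m + Poly_Mapping.single i e) 1 :: ('v, 'k::field) mpoly)"
  unfolding var_pow_def by (simp add: mult_single)

lemma var_pow_eq_power: "var_pow i e = (var_pow i 1 :: ('v, 'k::field) mpoly) ^ e"
proof (induction e)
  case (Suc e)
  have "var_pow i (Suc e) = (var_pow i 1 :: ('v, 'k) mpoly) * var_pow i e"
    unfolding var_pow_def mult_single single_add[symmetric] by simp
  with Suc.IH show ?case
    by simp
qed (simp add: var_pow_def)

definition monomial_ideal :: "('v \<Rightarrow>\<^sub>0 nat) set \<Rightarrow> ('v, 'k::zero) mpoly set" where
  "monomial_ideal M = {f. Poly_Mapping.keys f \<subseteq> M}"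

lemma is_ideal_monomial_ideal:
  assumes "\<And>m w. m \<in> M \<Longrightarrow> w + m \<in> M"
  shows "is_ideal (monomial_ideal M :: ('v, 'k::comm_ring_1) mpoly set)"
  unfolding is_ideal_def monomial_ideal_def
proof (intro conjI ballI allI)
  fix f g :: "('v, 'k) mpoly"
  assume "f \<in> {f. Poly_Mapping.keys f \<subseteq> M}" and "g \<in> {f. Poly_Mapping.keys f \<subseteq> M}"
  then show "f + g \<in> {f. Poly_Mapping.keys f \<subseteq> M}"
    using keys_add[of f g] by auto
next
  fix r f :: "('v, 'k) mpoly"
  assume "f \<in> {f. Poly_Mapping.keys f \<subseteq> M}"
  then show "r * f \<in> {f. Poly_Mapping.keys f \<subseteq> M}"
    using keys_mult[of r f] assms by blast
qed simp

lemma monomial_ideal_subset: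
  assumes J: "is_ideal J" and monomials: "\<And>m. m \<in> M \<Longrightarrow> Poly_Mapping.single m 1 \<in> J"
  shows "monomial_ideal M \<subseteq> (J :: ('v, 'k::comm_ring_1) mpoly set)"
proof
  fix f :: "('v, 'k) mpoly"
  assume "f \<in> monomial_ideal M"
  then have keys_f: "Poly_Mapping.keys f \<subseteq> M"
    by (simp add: monomial_ideal_def)
  have "f = (\<Sum>m\<in>Poly_Mapping.keys f. Poly_Mapping.single 0 (Poly_Mapping.lookup f m) * Poly_Mapping.single m 1)"
    by (intro poly_mapping_eqI) (simp add: mult_single lookup_sum lookup_single when_def in_keys_iff)
  also have "\<dots> \<in> J"
    using keys_f by (intro ideal_sum[OF J] ideal_mult_left[OF J] monomials) blast
  finally show "f \<in> J" .
qed

lemma ideal_colon_monomial_ideal: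
  "ideal_colon (monomial_ideal M) (Poly_Mapping.single u 1) =
     (monomial_ideal {m. u + m \<in> M} :: ('v, 'k::comm_ring_1) mpoly set)"
  unfolding ideal_colon_def monomial_ideal_def mult.commute[of _ "Poly_Mapping.single u 1"]
  by (auto simp: keys_monomial_mult)

lemma prime_ideal_maximal_monomial_ideal:
  "prime_ideal (monomial_ideal {m. m \<noteq> 0} :: ('v, 'k::idom) mpoly set)"
proof -
  have constant_term: "monomial_ideal {m. m \<noteq> 0} = {f :: ('v, 'k) mpoly. Poly_Mapping.lookup f 0 = 0}"
    unfolding monomial_ideal_def by (auto simp: in_keys_iff)
  have "is_ideal (monomial_ideal {m. m \<noteq> 0} :: ('v, 'k) mpoly set)"
    by (rule is_ideal_monomial_ideal) (simp add: monomial_add_eq_0_iff)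
  moreover have "(1 :: ('v, 'k) mpoly) \<notin> monomial_ideal {m. m \<noteq> 0}"
    unfolding constant_term by (simp add: lookup_one)
  moreover have "f \<in> monomial_ideal {m. m \<noteq> 0} \<or> g \<in> monomial_ideal {m. m \<noteq> 0}"
    if "f * g \<in> monomial_ideal {m. m \<noteq> 0}" for f g :: "('v, 'k) mpoly"
    using that unfolding constant_term by (simp add: lookup_mult_0)
  ultimately show ?thesis
    unfolding prime_ideal_def by blast
qed

section \<open>Powers of the ideal of pure powers\<close>

definition power_order :: "('v::finite \<Rightarrow> nat) \<Rightarrow> ('v \<Rightarrow>\<^sub>0 nat) \<Rightarrow> nat" where
  "power_order a m = (\<Sum>v\<in>UNIV. Poly_Mapping.lookup m v div a v)"

lemma power_order_0 [simp]: "power_order a 0 = 0"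
  by (simp add: power_order_def)

lemma power_order_add: "power_order a m + power_order a w \<le> power_order a (m + w)"
  unfolding power_order_def lookup_add sum.distrib[symmetric]
  by (intro sum_mono) (metis div_add1_eq le_add1)

lemma power_order_mono:
  "(\<And>v. Poly_Mapping.lookup m v \<le> Poly_Mapping.lookup w v) \<Longrightarrow> power_order a m \<le> power_order a w"
  unfolding power_order_def by (intro sum_mono div_le_mono)

lemma power_order_add_single:
  "power_order a (m + Poly_Mapping.single i c) + Poly_Mapping.lookup m i div a i =
     power_order a m + (Poly_Mapping.lookup m i + c) div a i"
proof -
  have split: "power_order a x =
      Poly_Mapping.lookup x i div a i + (\<Sum>v\<in>UNIV-{i}. Poly_Mapping.lookup x v div a v)" for x
    unfolding power_order_def by (simp add: sum.remove)
  have "(\<Sum>v\<in>UNIV-{i}. Poly_Mapping.lookup (m + Poly_Mapping.single i c) v div a v) =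
      (\<Sum>v\<in>UNIV-{i}. Poly_Mapping.lookup m v div a v)"
    by (intro sum.cong) (auto simp: lookup_add lookup_single)
  then show ?thesis
    using split[of m] split[of "m + Poly_Mapping.single i c"] by (simp add: lookup_add)
qed

lemma power_order_single: "power_order a (Poly_Mapping.single i c) = c div a i"
  using power_order_add_single[of a 0 i c] by simp

lemma power_order_add_pure_power:
  assumes "0 < a i"
  shows "power_order a (m + Poly_Mapping.single i (a i)) = Suc (power_order a m)"
  using power_order_add_single[of a m i "a i"] assms by (simp add: div_add_self2)

lemma power_order_add_var:
  "power_order a (m + Poly_Mapping.single i 1) =
     (if Suc (Poly_Mapping.lookup m i) mod a i = 0 then Suc (power_order a m) else power_order a m)"
  using power_order_add_single[of a m i 1] by (auto simp: div_Suc)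

lemma power_order_pos_imp_ex:
  assumes "0 < power_order a m"
  shows "\<exists>i. a i \<le> Poly_Mapping.lookup m i"
proof (rule ccontr)
  assume "\<nexists>i. a i \<le> Poly_Mapping.lookup m i"
  then have "Poly_Mapping.lookup m v div a v = 0" for v
    by (simp add: not_le)
  with assms show False
    by (simp add: power_order_def)
qed

definition power_order_ideal :: "('v::finite \<Rightarrow> nat) \<Rightarrow> nat \<Rightarrow> ('v, 'k::zero) mpoly set" where
  "power_order_ideal a k = monomial_ideal {m. k \<le> power_order a m}"

lemma is_ideal_power_order_ideal:
  "is_ideal (power_order_ideal a k :: ('v::finite, 'k::comm_ring_1) mpoly set)"
  unfolding power_order_ideal_def
proof (rule is_ideal_monomial_ideal)
  fix m w assume "m \<in> {m. k \<le> power_order a m}"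
  then show "w + m \<in> {m. k \<le> power_order a m}"
    using power_order_add[of a w m] by simp
qed

lemma power_order_ideal_mult:
  assumes "f \<in> power_order_ideal a j" and "g \<in> power_order_ideal a l"
  shows "f * g \<in> (power_order_ideal a (j + l) :: ('v::finite, 'k::comm_ring_1) mpoly set)"
  unfolding power_order_ideal_def monomial_ideal_def
proof safe
  fix m assume "m \<in> Poly_Mapping.keys (f * g)"
  then obtain x y where "m = x + y" "x \<in> Poly_Mapping.keys f" "y \<in> Poly_Mapping.keys g"
    using keys_mult[of f g] by blast
  then show "j + l \<le> power_order a m"
    using assms power_order_add[of a x y]
    unfolding power_order_ideal_def monomial_ideal_def by fastforce
qed

lemma prod_list_in_power_order_ideal:
  "set xs \<subseteq> power_order_ideal a 1 \<Longrightarrow>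
     prod_list xs \<in> (power_order_ideal a (length xs) :: ('v::finite, 'k::comm_ring_1) mpoly set)"
proof (induction xs)
  case Nil
  then show ?case
    by (simp add: power_order_ideal_def monomial_ideal_def)
next
  case (Cons x xs)
  then show ?case
    using power_order_ideal_mult[of x a 1 "prod_list xs" "length xs"] by simp
qed

lemma var_pow_in_power_order_ideal:
  "k \<le> e div a i \<Longrightarrow> var_pow i e \<in> (power_order_ideal a k :: ('v::finite, 'k::field) mpoly set)"
  by (simp add: power_order_ideal_def monomial_ideal_def var_pow_def power_order_single)

lemma pure_powers_prod_dvd_monomial:
  assumes pos: "\<forall>i. 0 < a i" and "k \<le> power_order a m"
  shows "\<exists>xs. length xs = k \<and> set xs \<subseteq> range (\<lambda>i. var_pow i (a i)) \<and>
    prod_list xs dvd (Poly_Mapping.single m 1 :: ('v::finite, 'k::field) mpoly)"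
  using assms(2)
proof (induction k arbitrary: m)
  case 0
  then show ?case
    by simp
next
  case (Suc k)
  then obtain i where "a i \<le> Poly_Mapping.lookup m i"
    using power_order_pos_imp_ex[of a m] by auto
  define m' where "m' = m - Poly_Mapping.single i (a i)"
  have m: "m' + Poly_Mapping.single i (a i) = m"
    unfolding m'_def using \<open>a i \<le> Poly_Mapping.lookup m i\<close>
    by (intro poly_mapping_eqI) (auto simp: lookup_add lookup_minus lookup_single when_def)
  have "k \<le> power_order a m'"
    using Suc.prems power_order_add_pure_power[of a i m'] pos m by simp
  from Suc.IH[OF this] obtain xs where xs: "length xs = k"
    "set xs \<subseteq> range (\<lambda>i. var_pow i (a i))"
    "prod_list xs dvd (Poly_Mapping.single m' 1 :: ('v, 'k) mpoly)"
    by blast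
  have "Poly_Mapping.single m 1 = Poly_Mapping.single m' 1 * (var_pow i (a i) :: ('v, 'k) mpoly)"
    unfolding monomial_mult_var_pow m ..
  then have "prod_list (var_pow i (a i) # xs) dvd (Poly_Mapping.single m 1 :: ('v, 'k) mpoly)"
    using xs(3) by (simp add: mult.commute mult_dvd_mono)
  with xs(1,2) show ?case
    by (intro exI[of _ "var_pow i (a i) # xs"]) auto
qed

lemma ideal_pow_pure_powers:
  assumes pos: "\<forall>i. 0 < a i"
    and I: "I = ideal_gen (range (\<lambda>i. var_pow i (a i) :: ('v::finite, 'k::field) mpoly))"
  shows "ideal_pow I k = power_order_ideal a k"
proof
  have "var_pow i (a i) \<in> (power_order_ideal a 1 :: ('v, 'k) mpoly set)" for i
    using pos by (intro var_pow_in_power_order_ideal) simp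
  then have I_subset: "I \<subseteq> power_order_ideal a 1"
    unfolding I by (intro ideal_gen_minimal is_ideal_power_order_ideal) auto
  show "ideal_pow I k \<subseteq> power_order_ideal a k"
    unfolding ideal_pow_def
  proof (intro ideal_gen_minimal is_ideal_power_order_ideal subsetI)
    fix x assume "x \<in> {prod_list xs | xs. length xs = k \<and> set xs \<subseteq> I}"
    then obtain xs where "x = prod_list xs" "length xs = k" "set xs \<subseteq> I"
      by blast
    then show "x \<in> power_order_ideal a k"
      using prod_list_in_power_order_ideal[of xs a] I_subset by auto
  qed
next
  show "power_order_ideal a k \<subseteq> ideal_pow I k"
    unfolding power_order_ideal_def ideal_pow_def
  proof (rule monomial_ideal_subset[OF is_ideal_ideal_gen])
    fix m assume "m \<in> {m. k \<le> power_order a m}"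
    then have "k \<le> power_order a m"
      by simp
    from pure_powers_prod_dvd_monomial[OF pos this] obtain xs where xs: "length xs = k"
      "set xs \<subseteq> range (\<lambda>i. var_pow i (a i))"
      "prod_list xs dvd (Poly_Mapping.single m 1 :: ('v, 'k) mpoly)"
      by blast
    then obtain r where m: "Poly_Mapping.single m 1 = prod_list xs * r"
      by (elim dvdE)
    have "set xs \<subseteq> I"
      using xs(2) ideal_gen_superset[of "range (\<lambda>i. var_pow i (a i))"] unfolding I by (rule order_trans)
    with xs(1) have "prod_list xs \<in> {prod_list xs | xs. length xs = k \<and> set xs \<subseteq> I}"
      by blast
    then have "prod_list xs \<in> ideal_gen {prod_list xs | xs. length xs = k \<and> set xs \<subseteq> I}"
      using ideal_gen_superset by (rule subsetD[rotated])
    then show "Poly_Mapping.single m 1 \<in> ideal_gen {prod_list xs | xs. length xs = k \<and> set xs \<subseteq> I}"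
      unfolding m mult.commute[of "prod_list xs"] by (rule ideal_mult_left[OF is_ideal_ideal_gen])
  qed
qed

section \<open>The v-number and the initial degree\<close>

lemma Min_range_obtain:
  fixes a :: "'v::finite \<Rightarrow> 'b::linorder"
  obtains i where "a i = Min (range a)"
proof -
  have "Min (range a) \<in> range a"
    by (intro Min_in) auto
  with that show ?thesis
    by (metis rangeE)
qed

lemma mon_deg_socle_monomial_ge:
  assumes pos: "\<forall>i. 0 < a i"
    and outside: "power_order a u \<le> k"
    and socle: "\<forall>i. k < power_order a (u + Poly_Mapping.single i 1)"
  shows "(\<Sum>v\<in>UNIV. a v - 1) + k * Min (range a) \<le> mon_deg u"
proof -
  have full_remainder: "Suc (Poly_Mapping.lookup u v) mod a v = 0" for v
    using outside socle[rule_format, of v] power_order_add_var[of a u v] by (simp split: if_splits)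
  have order_u: "power_order a u = k"
    using outside socle[rule_format, of undefined] power_order_add_var[of a u undefined]
    by (simp split: if_splits)
  have term_bound: "Min (range a) * (Poly_Mapping.lookup u v div a v) + (a v - 1) \<le> Poly_Mapping.lookup u v"
    for v
  proof -
    have "Poly_Mapping.lookup u v mod a v = a v - 1"
      using full_remainder[of v] pos by (auto simp: mod_Suc split: if_splits)
    then have "Poly_Mapping.lookup u v = a v * (Poly_Mapping.lookup u v div a v) + (a v - 1)"
      by (metis div_mult_mod_eq mult.commute)
    moreover have "Min (range a) \<le> a v"
      by simp
    ultimately show ?thesis
      by (metis add_le_mono1 mult_le_mono1)
  qed
  have "(\<Sum>v\<in>UNIV. a v - 1) + k * Min (range a) = Min (range a) * power_order a u + (\<Sum>v\<in>UNIV. a v - 1)"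
    using order_u by simp
  also have "\<dots> = (\<Sum>v\<in>UNIV. Min (range a) * (Poly_Mapping.lookup u v div a v) + (a v - 1))"
    unfolding power_order_def by (simp add: sum.distrib sum_distrib_left)
  also have "\<dots> \<le> (\<Sum>v\<in>UNIV. Poly_Mapping.lookup u v)"
    by (intro sum_mono term_bound)
  also have "\<dots> = mon_deg u"
    by (simp add: mon_deg_eq_sum)
  finally show ?thesis .
qed

definition socle_monomial :: "('v::finite \<Rightarrow> nat) \<Rightarrow> 'v \<Rightarrow> nat \<Rightarrow> ('v \<Rightarrow>\<^sub>0 nat)" where
  "socle_monomial a i0 k = Abs_poly_mapping (\<lambda>v. a v - 1 + (if v = i0 then k * a v else 0))"

lemma lookup_socle_monomial:
  "Poly_Mapping.lookup (socle_monomial a i0 k) v = a v - 1 + (if v = i0 then k * a v else 0)"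
  unfolding socle_monomial_def by (subst lookup_Abs_poly_mapping) simp_all

lemma mon_deg_socle_monomial: "mon_deg (socle_monomial a i0 k) = (\<Sum>v\<in>UNIV. a v - 1) + k * a i0"
  by (simp add: mon_deg_eq_sum lookup_socle_monomial sum.distrib)

lemma power_order_socle_monomial:
  assumes "\<forall>i. 0 < a i"
  shows "power_order a (socle_monomial a i0 k) = k"
proof -
  have quotient: "(a v - 1 + c * a v) div a v = c" for v c
  proof -
    have "(a v - 1 + c * a v) div a v = c + (a v - 1) div a v"
      using assms by (intro div_mult_self1) simp
    then show ?thesis
      using assms[rule_format, of v] by simp
  qed
  have "(a v - 1 + (if v = i0 then k * a v else 0)) div a v = (if v = i0 then k else 0)" for v
    using quotient[of v k] quotient[of v 0] by (cases "v = i0") simp_all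
  then show ?thesis
    unfolding power_order_def lookup_socle_monomial by simp
qed

lemma power_order_socle_monomial_add_var:
  assumes "\<forall>i. 0 < a i"
  shows "power_order a (socle_monomial a i0 k + Poly_Mapping.single i 1) = Suc k"
proof -
  have "Suc (Poly_Mapping.lookup (socle_monomial a i0 k) i) = a i + (if i = i0 then k else 0) * a i"
    using assms[rule_format, of i] by (simp add: lookup_socle_monomial)
  then have "Suc (Poly_Mapping.lookup (socle_monomial a i0 k) i) mod a i = 0"
    by simp
  then show ?thesis
    unfolding power_order_add_var power_order_socle_monomial[OF assms] by simp
qed

lemma ideal_colon_socle_monomial:
  assumes pos: "\<forall>i. 0 < a i"
  shows "ideal_colon (power_order_ideal a (k + 1)) (Poly_Mapping.single (socle_monomial a i0 k) 1) =
    (monomial_ideal {m. m \<noteq> 0} :: ('v::finite, 'k::comm_ring_1) mpoly set)"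
proof -
  let ?U = "socle_monomial a i0 k"
  have "k + 1 \<le> power_order a (?U + m) \<longleftrightarrow> m \<noteq> 0" for m
  proof
    assume "k + 1 \<le> power_order a (?U + m)"
    then show "m \<noteq> 0"
      using power_order_socle_monomial[OF pos] by auto
  next
    assume "m \<noteq> 0"
    then obtain i where "Poly_Mapping.lookup m i \<noteq> 0"
      by (metis lookup_zero poly_mapping_eqI)
    then have "power_order a (?U + Poly_Mapping.single i 1) \<le> power_order a (?U + m)"
      by (intro power_order_mono) (auto simp: lookup_add lookup_single when_def)
    then show "k + 1 \<le> power_order a (?U + m)"
      using power_order_socle_monomial_add_var[OF pos] by simp
  qed
  then show ?thesis
    unfolding power_order_ideal_def ideal_colon_monomial_ideal by simp
qed

lemma homogeneous_prime_colon_deg_ge: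
  assumes pos: "\<forall>i. 0 < a i" and hom: "homogeneous_of d f"
    and prime: "prime_ideal (ideal_colon (power_order_ideal a (k + 1)) f :: ('v::finite, 'k::field) mpoly set)"
  shows "(\<Sum>v\<in>UNIV. a v - 1) + k * Min (range a) \<le> d"
proof -
  let ?J = "power_order_ideal a (k + 1) :: ('v, 'k) mpoly set"
  have "f \<notin> ?J"
    using ideal_colon_prime_not_member[OF is_ideal_power_order_ideal prime] .
  then obtain u where u: "u \<in> Poly_Mapping.keys f" "power_order a u \<le> k"
    unfolding power_order_ideal_def monomial_ideal_def by (auto simp flip: not_less_eq_eq)
  have "k < power_order a (u + Poly_Mapping.single i 1)" for i
  proof -
    have "var_pow i ((k + 1) * a i) \<in> ?J"
      using pos by (intro var_pow_in_power_order_ideal) simp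
    then have "var_pow i ((k + 1) * a i) \<in> ideal_colon ?J f"
      using ideal_subset_colon[OF is_ideal_power_order_ideal] by (rule subsetD[rotated])
    moreover have "(k + 1) * a i = Suc ((k + 1) * a i - 1)"
      using pos by simp
    ultimately have "var_pow i 1 ^ Suc ((k + 1) * a i - 1) \<in> ideal_colon ?J f"
      by (metis var_pow_eq_power)
    then have "var_pow i 1 \<in> ideal_colon ?J f"
      by (rule prime_ideal_power_mem[OF prime])
    then have "Poly_Mapping.keys (var_pow i 1 * f) \<subseteq> {m. k + 1 \<le> power_order a m}"
      unfolding ideal_colon_def power_order_ideal_def monomial_ideal_def by simp
    moreover have "Poly_Mapping.single i 1 + u \<in> Poly_Mapping.keys (var_pow i 1 * f)"
      unfolding var_pow_def keys_monomial_mult using u(1) by blast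
    ultimately show ?thesis
      by (auto simp: add.commute)
  qed
  with pos u have "(\<Sum>v\<in>UNIV. a v - 1) + k * Min (range a) \<le> mon_deg u"
    by (intro mon_deg_socle_monomial_ge) auto
  also have "mon_deg u = d"
    using hom u(1) unfolding homogeneous_of_def by blast
  finally show ?thesis .
qed

lemma v_number_power_order_ideal:
  assumes pos: "\<forall>i. 0 < a i"
  shows "v_number (power_order_ideal a (k + 1) :: ('v::finite, 'k::field) mpoly set) =
    (\<Sum>v\<in>UNIV. a v - 1) + k * Min (range a)"
  unfolding v_number_def
proof (rule Least_equality)
  obtain i0 where "a i0 = Min (range a)"
    by (rule Min_range_obtain)
  let ?f = "Poly_Mapping.single (socle_monomial a i0 k) 1 :: ('v, 'k) mpoly"
  have "homogeneous_of ((\<Sum>v\<in>UNIV. a v - 1) + k * Min (range a)) ?f"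
    unfolding homogeneous_of_def using \<open>a i0 = Min (range a)\<close> by (simp add: mon_deg_socle_monomial)
  moreover have "ideal_colon (power_order_ideal a (k + 1)) ?f \<in> Ass (power_order_ideal a (k + 1))"
    unfolding Ass_def ideal_colon_socle_monomial[OF pos]
    using prime_ideal_maximal_monomial_ideal ideal_colon_socle_monomial[OF pos] by blast
  ultimately show "\<exists>f P. homogeneous_of ((\<Sum>v\<in>UNIV. a v - 1) + k * Min (range a)) f \<and>
      P \<in> Ass (power_order_ideal a (k + 1) :: ('v, 'k) mpoly set) \<and>
      ideal_colon (power_order_ideal a (k + 1)) f = P"
    by blast
next
  fix d assume "\<exists>f P. homogeneous_of d f \<and> P \<in> Ass (power_order_ideal a (k + 1) :: ('v, 'k) mpoly set) \<and>
      ideal_colon (power_order_ideal a (k + 1)) f = P"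
  then obtain f :: "('v, 'k) mpoly" where "homogeneous_of d f"
    and "prime_ideal (ideal_colon (power_order_ideal a (k + 1)) f)"
    by (auto simp: Ass_def)
  then show "(\<Sum>v\<in>UNIV. a v - 1) + k * Min (range a) \<le> d"
    by (rule homogeneous_prime_colon_deg_ge[OF pos])
qed

lemma alpha_power_order_ideal:
  assumes pos: "\<forall>i. 0 < a i"
  shows "alpha_ideal (power_order_ideal a 1 :: ('v::finite, 'k::field) mpoly set) = Min (range a)"
  unfolding alpha_ideal_def
proof (rule Least_equality)
  obtain i0 where i0: "a i0 = Min (range a)"
    by (rule Min_range_obtain)
  let ?f = "var_pow i0 (a i0) :: ('v, 'k) mpoly"
  have "?f \<in> power_order_ideal a 1"
    using pos by (intro var_pow_in_power_order_ideal) simp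
  moreover have "?f \<noteq> 0"
    unfolding var_pow_def by (metis lookup_single_eq lookup_zero zero_neq_one)
  moreover have "homogeneous_of (Min (range a)) ?f"
    unfolding homogeneous_of_def var_pow_def using pos i0 by (simp add: mon_deg_def)
  ultimately show "\<exists>f\<in>power_order_ideal a 1 :: ('v, 'k) mpoly set. f \<noteq> 0 \<and> homogeneous_of (Min (range a)) f"
    by blast
next
  fix d assume "\<exists>f\<in>power_order_ideal a 1 :: ('v, 'k) mpoly set. f \<noteq> 0 \<and> homogeneous_of d f"
  then obtain f :: "('v, 'k) mpoly" where f: "f \<in> power_order_ideal a 1" "f \<noteq> 0" "homogeneous_of d f"
    by blast
  then obtain m where m: "m \<in> Poly_Mapping.keys f"
    by fastforce
  then have "0 < power_order a m"
    using f(1) unfolding power_order_ideal_def monomial_ideal_def by auto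
  then obtain i where "a i \<le> Poly_Mapping.lookup m i"
    using power_order_pos_imp_ex by blast
  have "Min (range a) \<le> a i"
    by simp
  also have "\<dots> \<le> Poly_Mapping.lookup m i"
    by fact
  also have "\<dots> \<le> mon_deg m"
    unfolding mon_deg_eq_sum by (rule member_le_sum) simp_all
  also have "mon_deg m = d"
    using f(3) m unfolding homogeneous_of_def by blast
  finally show "Min (range a) \<le> d" .
qed

theorem proposition4p13:
  fixes a :: "'v::finite \<Rightarrow> nat" and n :: nat
  assumes "\<forall>i. a i > 0"
    and "n \<ge> 1"
    and "I = ideal_gen (range (\<lambda>i. var_pow i (a i) :: ('v, 'k::field) mpoly))"
  shows "v_number (ideal_pow I (n + 1)) = v_number I + n * alpha_ideal I"
proof -
  have "I = ideal_pow I 1"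
    unfolding assms(3) by (rule ideal_pow_1[OF is_ideal_ideal_gen, symmetric])
  also have "\<dots> = power_order_ideal a 1"
    by (rule ideal_pow_pure_powers[OF assms(1,3)])
  finally have I: "I = power_order_ideal a 1" .
  \<comment> \<open>The identity also holds for n = 0.\<close>
  have "ideal_pow I (n + 1) = power_order_ideal a (n + 1)"
    by (rule ideal_pow_pure_powers[OF assms(1,3)])
  then show ?thesis
    using v_number_power_order_ideal[OF assms(1), where 'k = 'k, of n]
      v_number_power_order_ideal[OF assms(1), where 'k = 'k, of 0]
      alpha_power_order_ideal[OF assms(1), where 'k = 'k]
    unfolding I by simp
qed

end
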